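(* Let $G$ be a $d$-regular graph ($d>1$) and let $\sigma,\sigma'$ be two good signings of $G$ that are not equivalent. Define the signing $\tau$ of $G$ by $\tau(uv)=\sigma(uv)\sigma'(uv)$ for $uv\in E(G)$. Let $G'$ be the $2$-lift of $G$ determined by $\tau$: $V(G')=\bigcup_{v\in V(G)}\{v_0,v_1\}$, and for each $uv\in E(G)$, $G'$ contains the edges $u_0v_0,u_1v_1$ if $\tau(uv)=1$ and the edges $u_0v_1,u_1v_0$ if $\tau(uv)=-1$ (and no other edges). Define the signing $\phi$ of $G'$ by giving both edges of $G'$ lying over $uv\in E(G)$ the sign $\sigma'(uv)$. Then $\phi$ is a good signing of $G'$, i.e. every eigenvalue of the signed adjacency matrix $A^{\phi}$ has absolute value at most $2\sqrt{d-1}$.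
   Context: For an edge-signing $\sigma: E(H)\to\{-1,1\}$ of a graph $H$, the signed adjacency matrix $A^{\sigma}$ has $(i,j)$ entry $\sigma(ij)$ if $ij\in E(H)$ and $0$ otherwise. A good signing of a $d$-regular graph is a signing all of whose signed adjacency eigenvalues have absolute value at most $2\sqrt{d-1}$ (note $G'$ is again $d$-regular). Two signings $\sigma,\sigma'$ of $G$ are equivalent if there is a diagonal matrix $D$ with diagonal entries in $\{1,-1\}$ such that $DA^{\sigma}D=A^{\sigma'}$. *)

theory Defs
  imports "HOL-Analysis.Analysis"
begin

definition regular_graph :: "('a::finite \<Rightarrow> 'a \<Rightarrow> bool) \<Rightarrow> nat \<Rightarrow> bool" where
  "regular_graph E d \<longleftrightarrow> (\<forall>u v. E u v \<longrightarrow> E v u) \<and> (\<forall>v. \<not> E v v) \<and>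
     (\<forall>v. card {u. E v u} = d)"

definition is_signing :: "('a \<Rightarrow> 'a \<Rightarrow> bool) \<Rightarrow> ('a \<Rightarrow> 'a \<Rightarrow> real) \<Rightarrow> bool" where
  "is_signing E \<sigma> \<longleftrightarrow> (\<forall>u v. E u v \<longrightarrow> \<sigma> u v = \<sigma> v u \<and> (\<sigma> u v = 1 \<or> \<sigma> u v = -1))"

definition signed_adj :: "('a::finite \<Rightarrow> 'a \<Rightarrow> bool) \<Rightarrow> ('a \<Rightarrow> 'a \<Rightarrow> real) \<Rightarrow> real^'a^'a" where
  "signed_adj E \<sigma> = (\<chi> i j. if E i j then \<sigma> i j else 0)"

definition is_eigenvalue :: "real^'n^'n \<Rightarrow> real \<Rightarrow> bool" where
  "is_eigenvalue A c \<longleftrightarrow> (\<exists>x. x \<noteq> 0 \<and> A *v x = c *\<^sub>R x)"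

definition good_signing :: "('a::finite \<Rightarrow> 'a \<Rightarrow> bool) \<Rightarrow> nat \<Rightarrow> ('a \<Rightarrow> 'a \<Rightarrow> real) \<Rightarrow> bool" where
  "good_signing E d \<sigma> \<longleftrightarrow> is_signing E \<sigma> \<and>
     (\<forall>c. is_eigenvalue (signed_adj E \<sigma>) c \<longrightarrow> \<bar>c\<bar> \<le> 2 * sqrt (real d - 1))"

definition equivalent_signings ::
  "('a::finite \<Rightarrow> 'a \<Rightarrow> bool) \<Rightarrow> ('a \<Rightarrow> 'a \<Rightarrow> real) \<Rightarrow> ('a \<Rightarrow> 'a \<Rightarrow> real) \<Rightarrow> bool" where
  "equivalent_signings E \<sigma> \<sigma>' \<longleftrightarrow>
     (\<exists>D::real^'a^'a. (\<forall>i j. i \<noteq> j \<longrightarrow> D $ i $ j = 0) \<and> (\<forall>i. D $ i $ i = 1 \<or> D $ i $ i = -1) \<and>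
        D ** signed_adj E \<sigma> ** D = signed_adj E \<sigma>')"

text \<open>The 2-lift of G determined by the signing tau; vertex v_i is (v, i) with i :: bool
(False = 0, True = 1).\<close>
definition two_lift :: "('a \<Rightarrow> 'a \<Rightarrow> bool) \<Rightarrow> ('a \<Rightarrow> 'a \<Rightarrow> real) \<Rightarrow> ('a \<times> bool) \<Rightarrow> ('a \<times> bool) \<Rightarrow> bool" where
  "two_lift E \<tau> x y \<longleftrightarrow> E (fst x) (fst y) \<and>
     (if \<tau> (fst x) (fst y) = 1 then snd x = snd y else snd x \<noteq> snd y)"

definition lift_signing :: "('a \<Rightarrow> 'a \<Rightarrow> real) \<Rightarrow> ('a \<times> bool) \<Rightarrow> ('a \<times> bool) \<Rightarrow> real" where
  "lift_signing s x y = s (fst x) (fst y)"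

end

theory Submission
  imports Defs
begin

(* Restrict an eigenvector x of the lifted matrix to the two sheets, giving x0 and x1 on G.
   Then x0 + x1 satisfies the eigen-equation of the signing sigma', and x0 - x1 that of the
   signing tau sigma' = sigma, with the same eigenvalue; they cannot both vanish.  Hence every
   eigenvalue of the lift is an eigenvalue of one of the two good signings. *)

lemma signed_adj_mult_vec_nth:
  fixes E :: "'a::finite \<Rightarrow> 'a \<Rightarrow> bool"
  shows "(signed_adj E s *v y) $ u = (\<Sum>v\<in>UNIV. if E u v then s u v * y $ v else 0)"
  by (auto simp: matrix_vector_mult_def signed_adj_def intro: sum.cong)

lemma two_lift_signed_adj_mult_vec_nth:
  fixes E :: "'a::finite \<Rightarrow> 'a \<Rightarrow> bool" and x :: "real^('a \<times> bool)"
  shows "(signed_adj (two_lift E \<tau>) (lift_signing s) *v x) $ (u, a) =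
    (\<Sum>v\<in>UNIV. if E u v then s u v * x $ (v, if \<tau> u v = 1 then a else \<not> a) else 0)"
proof -
  have "(signed_adj (two_lift E \<tau>) (lift_signing s) *v x) $ (u, a) =
      (\<Sum>v\<in>UNIV. \<Sum>b\<in>UNIV. (if two_lift E \<tau> (u, a) (v, b)
         then lift_signing s (u, a) (v, b) else 0) * x $ (v, b))"
    by (simp add: matrix_vector_mult_def signed_adj_def sum.cartesian_product
        flip: UNIV_Times_UNIV)
  also have "\<dots> = (\<Sum>v\<in>UNIV. if E u v then s u v * x $ (v, if \<tau> u v = 1 then a else \<not> a) else 0)"
    by (rule sum.cong) (auto simp: UNIV_bool two_lift_def lift_signing_def)
  finally show ?thesis .
qed

lemma is_signing_lift_signing:
  assumes "is_signing E s"
  shows "is_signing (two_lift E \<tau>) (lift_signing s)"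
  using assms by (auto simp: is_signing_def two_lift_def lift_signing_def)

lemma eigenvalue_two_lift_cases:
  fixes E :: "'a::finite \<Rightarrow> 'a \<Rightarrow> bool"
  assumes "is_eigenvalue (signed_adj (two_lift E \<tau>) (lift_signing s)) c"
  shows "is_eigenvalue (signed_adj E s) c \<or>
    is_eigenvalue (signed_adj E (\<lambda>u v. if \<tau> u v = 1 then s u v else - s u v)) c"
proof -
  obtain x where "x \<noteq> 0" and x_eigen: "signed_adj (two_lift E \<tau>) (lift_signing s) *v x = c *\<^sub>R x"
    using assms unfolding is_eigenvalue_def by blast
  have row: "(\<Sum>v\<in>UNIV. if E u v then s u v * x $ (v, if \<tau> u v = 1 then a else \<not> a) else 0)
      = c * x $ (u, a)" for u a
    using arg_cong[OF x_eigen, of "\<lambda>w. w $ (u, a)"]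
    by (simp add: two_lift_signed_adj_mult_vec_nth)
  define y :: "real^'a" where "y = (\<chi> u. x $ (u, False) + x $ (u, True))"
  define z :: "real^'a" where "z = (\<chi> u. x $ (u, False) - x $ (u, True))"
  have "signed_adj E s *v y = c *\<^sub>R y"
  proof (rule vec_eq_iff[THEN iffD2], rule allI)
    fix u
    have "(signed_adj E s *v y) $ u =
        (\<Sum>v\<in>UNIV. if E u v then s u v * x $ (v, if \<tau> u v = 1 then False else True) else 0) +
        (\<Sum>v\<in>UNIV. if E u v then s u v * x $ (v, if \<tau> u v = 1 then True else False) else 0)"
      by (auto simp: signed_adj_mult_vec_nth y_def algebra_simps simp flip: sum.distrib
          intro: sum.cong)
    also have "\<dots> = c * x $ (u, False) + c * x $ (u, True)"
      using row[of u False] row[of u True] by (simp only: not_False_eq_True not_True_eq_False)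
    finally show "(signed_adj E s *v y) $ u = (c *\<^sub>R y) $ u"
      by (simp add: y_def algebra_simps)
  qed
  moreover have "signed_adj E (\<lambda>u v. if \<tau> u v = 1 then s u v else - s u v) *v z = c *\<^sub>R z"
  proof (rule vec_eq_iff[THEN iffD2], rule allI)
    fix u
    have "(signed_adj E (\<lambda>u v. if \<tau> u v = 1 then s u v else - s u v) *v z) $ u =
        (\<Sum>v\<in>UNIV. if E u v then s u v * x $ (v, if \<tau> u v = 1 then False else True) else 0) -
        (\<Sum>v\<in>UNIV. if E u v then s u v * x $ (v, if \<tau> u v = 1 then True else False) else 0)"
      by (auto simp: signed_adj_mult_vec_nth z_def algebra_simps simp flip: sum_subtractf
          intro: sum.cong)
    also have "\<dots> = c * x $ (u, False) - c * x $ (u, True)"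
      using row[of u False] row[of u True] by (simp only: not_False_eq_True not_True_eq_False)
    finally show "(signed_adj E (\<lambda>u v. if \<tau> u v = 1 then s u v else - s u v) *v z) $ u =
        (c *\<^sub>R z) $ u"
      by (simp add: z_def algebra_simps)
  qed
  moreover have "y \<noteq> 0 \<or> z \<noteq> 0"
  proof (rule ccontr)
    assume "\<not> (y \<noteq> 0 \<or> z \<noteq> 0)"
    then have "x $ (u, False) + x $ (u, True) = 0" "x $ (u, False) - x $ (u, True) = 0" for u
      by (auto simp: y_def z_def vec_eq_iff)
    then have "x = 0"
      by (auto simp: vec_eq_iff all_bool_eq)
    with \<open>x \<noteq> 0\<close> show False ..
  qed
  ultimately show ?thesis
    unfolding is_eigenvalue_def by blast
qed

lemma signed_adj_twist_by_product:
  assumes "is_signing E \<sigma>" and "is_signing E \<sigma>'"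
  shows "signed_adj E (\<lambda>u v. if \<sigma> u v * \<sigma>' u v = 1 then \<sigma>' u v else - \<sigma>' u v) = signed_adj E \<sigma>"
proof -
  have "(if \<sigma> u v * \<sigma>' u v = 1 then \<sigma>' u v else - \<sigma>' u v) = \<sigma> u v" if "E u v" for u v
  proof -
    have "\<sigma> u v = 1 \<or> \<sigma> u v = -1" and "\<sigma>' u v = 1 \<or> \<sigma>' u v = -1"
      using assms that unfolding is_signing_def by blast+
    then show ?thesis
      by auto
  qed
  then show ?thesis
    by (simp add: signed_adj_def vec_eq_iff)
qed

theorem mainTheorem5:
  fixes E :: "'a::finite \<Rightarrow> 'a \<Rightarrow> bool" and d :: nat
    and \<sigma> \<sigma>' :: "'a \<Rightarrow> 'a \<Rightarrow> real"
  assumes "regular_graph E d" and "d > 1"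
    and "good_signing E d \<sigma>" and "good_signing E d \<sigma>'"
    and "\<not> equivalent_signings E \<sigma> \<sigma>'"
  shows "good_signing (two_lift E (\<lambda>u v. \<sigma> u v * \<sigma>' u v)) d (lift_signing \<sigma>')"
proof -
  have "is_signing E \<sigma>" and "is_signing E \<sigma>'"
    using assms(3,4) by (simp_all add: good_signing_def)
  have "\<bar>c\<bar> \<le> 2 * sqrt (real d - 1)"
    if "is_eigenvalue (signed_adj (two_lift E (\<lambda>u v. \<sigma> u v * \<sigma>' u v)) (lift_signing \<sigma>')) c" for c
    using eigenvalue_two_lift_cases[OF that] assms(3,4)
    by (auto simp: good_signing_def signed_adj_twist_by_product[OF \<open>is_signing E \<sigma>\<close> \<open>is_signing E \<sigma>'\<close>])
  with \<open>is_signing E \<sigma>'\<close> show ?thesis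
    by (simp add: good_signing_def is_signing_lift_signing)
qed

end
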